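(* Let $\mu$ be a Lévy measure as in the context and $\psi,\varphi\in L^\infty(\mathbb{R}^d)$. Then $$\int_{\mathbb{R}^d\times\mathbb{R}^d}|\psi(x+z)-\psi(x)|\,|\varphi(x+z)-\varphi(x)|\,d\mu(z)\,dx<\infty$$ if any one of the following holds: (i) $\psi,\varphi\in H^{\mathcal L}(\mathbb{R}^d)$; (ii) $\psi\in H^{\mathcal L}(\mathbb{R}^d)$, $\varphi$ is Lipschitz continuous, and $\psi$ or $\varphi$ has compact support; (iii) $\psi$ is of bounded variation, $\varphi$ is Lipschitz continuous, and $\psi$ or $\varphi$ has compact support; (iv) $\psi$ or $\varphi$ has compact support and $\mu(\mathbb{R}^d\setminus\{0\})<\infty$.
   Context: $\mu$ is a symmetric nonnegative Radon measure on $\mathbb{R}^d\setminus\{0\}$ with $\int(|z|^2\wedge1)\,d\mu(z)<\infty$. $H^{\mathcal L}(\mathbb{R}^d)$ denotes the space of $\phi\in L^2(\mathbb{R}^d)$ with $\int_{\mathbb{R}^d}\int_{\mathbb{R}^d}(\phi(x+z)-\phi(x))^2\,d\mu(z)\,dx<\infty$. *)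

theory Defs
  imports "HOL-Analysis.Analysis"
begin

text \<open>Levy measure on R^d (modelled as a Borel measure on the whole space giving no mass
  to the origin): symmetric, Radon on R^d minus the origin, and integrating min(|z|^2,1).\<close>
definition levy_measure :: "'a::euclidean_space measure \<Rightarrow> bool" where
  "levy_measure \<mu> \<longleftrightarrow>
     sets \<mu> = sets borel \<and>
     emeasure \<mu> {0} = 0 \<and>
     (\<forall>A \<in> sets borel. emeasure \<mu> (uminus ` A) = emeasure \<mu> A) \<and>
     (\<forall>K. compact K \<and> 0 \<notin> K \<longrightarrow> emeasure \<mu> K < \<infinity>) \<and>
     (\<integral>\<^sup>+ z. ennreal (min ((norm z)\<^sup>2) 1) \<partial>\<mu>) < \<infinity>"

definition Linf :: "('a::euclidean_space \<Rightarrow> real) \<Rightarrow> bool" where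
  "Linf f \<longleftrightarrow> f \<in> borel_measurable borel \<and> (\<exists>C. AE x in lborel. \<bar>f x\<bar> \<le> C)"

definition H_L :: "'a::euclidean_space measure \<Rightarrow> ('a \<Rightarrow> real) \<Rightarrow> bool" where
  "H_L \<mu> f \<longleftrightarrow> f \<in> borel_measurable borel \<and>
     (\<integral>\<^sup>+ x. ennreal ((f x)\<^sup>2) \<partial>lborel) < \<infinity> \<and>
     (\<integral>\<^sup>+ x. (\<integral>\<^sup>+ z. ennreal ((f (x + z) - f x)\<^sup>2) \<partial>\<mu>) \<partial>lborel) < \<infinity>"

definition has_compact_support :: "('a::euclidean_space \<Rightarrow> real) \<Rightarrow> bool" where
  "has_compact_support f \<longleftrightarrow> compact (closure {x. f x \<noteq> 0})"

definition C1_field :: "('a::euclidean_space \<Rightarrow> 'a) \<Rightarrow> bool" where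
  "C1_field g \<longleftrightarrow> (\<exists>D :: 'a \<Rightarrow> 'a \<Rightarrow>\<^sub>L 'a.
     (\<forall>x. (g has_derivative blinfun_apply (D x)) (at x)) \<and> continuous_on UNIV D)"

definition divergence :: "('a::euclidean_space \<Rightarrow> 'a) \<Rightarrow> 'a \<Rightarrow> real" where
  "divergence g x = (\<Sum>i\<in>Basis. frechet_derivative g (at x) i \<bullet> i)"

definition bounded_variation :: "('a::euclidean_space \<Rightarrow> real) \<Rightarrow> bool" where
  "bounded_variation f \<longleftrightarrow> integrable lborel f \<and>
     (\<exists>C. \<forall>g. C1_field g \<and> compact (closure {x. g x \<noteq> 0}) \<and> (\<forall>x. norm (g x) \<le> 1)
            \<longrightarrow> (\<integral>x. f x * divergence g x \<partial>lborel) \<le> C)"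

end

theory Submission
  imports Defs
begin

text \<open>
  The integrand is bounded case by case and Tonelli's theorem moves the \<open>z\<close>-integration outside.
  In case (i), \<open>|ab| \<le> a\<^sup>2 + b\<^sup>2\<close> reduces everything to the two \<open>H\<^sup>L\<close> energies. A bounded
  \<open>L\<close>-Lipschitz \<open>\<phi>\<close> satisfies \<open>|\<phi>(x + z) - \<phi>(x)| \<le> M min(|z|, 1)\<close>, and \<open>min(|z|\<^sup>2, 1)\<close> is
  \<open>\<mu>\<close>-integrable; under compact support the \<open>x\<close>-integral only sees two translates of a compact
  set, which gives (ii) and, since the integrand is bounded, (iv). For (iii), a function of
  bounded variation satisfies \<open>\<parallel>\<psi>(\<cdot> + z) - \<psi>\<parallel>\<^sub>1 \<le> C min(|z|, 1)\<close>: testing the difference against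
  a \<open>C\<^sup>1\<close> function \<open>h\<close> with compact support, \<open>h(x) - h(x - z)\<close> is the divergence of the field
  \<open>(z/|z|) \<integral>\<^sub>0\<^sup>1 h(x - t z) dt\<close>, so the pairing is bounded by \<open>|z|\<close> times the total variation,
  and such test functions (cut-off polynomials) come close to realising the \<open>L\<^sup>1\<close> norm.
\<close>

lemma nn_integral_lborel_translate:
  fixes f :: "'a::euclidean_space \<Rightarrow> ennreal"
  assumes "f \<in> borel_measurable borel"
  shows "(\<integral>\<^sup>+ x. f (x + z) \<partial>lborel) = (\<integral>\<^sup>+ x. f x \<partial>lborel)"
proof -
  have "(\<integral>\<^sup>+ x. f x \<partial>lborel) = (\<integral>\<^sup>+ x. f x \<partial>distr lborel borel ((+) z))"
    by (simp add: lborel_distr_plus)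
  also have "\<dots> = (\<integral>\<^sup>+ x. f (z + x) \<partial>lborel)"
    by (rule nn_integral_distr) (use assms in auto)
  finally show ?thesis by (simp add: add.commute)
qed

lemma integral_lborel_translate:
  fixes f :: "'a::euclidean_space \<Rightarrow> real"
  assumes "f \<in> borel_measurable borel"
  shows "(\<integral> x. f (x + z) \<partial>lborel) = (\<integral> x. f x \<partial>lborel)"
proof -
  have "(\<integral> x. f x \<partial>lborel) = (\<integral> x. f x \<partial>distr lborel borel ((+) z))"
    by (simp add: lborel_distr_plus)
  also have "\<dots> = (\<integral> x. f (z + x) \<partial>lborel)"
    by (rule integral_distr) (use assms in auto)
  finally show ?thesis by (simp add: add.commute)
qed

lemma integrable_lborel_translate:
  fixes f :: "'a::euclidean_space \<Rightarrow> real"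
  assumes "integrable lborel f"
  shows "integrable lborel (\<lambda>x. f (x + z))"
proof -
  have "integrable (distr lborel borel ((+) z)) f" by (simp add: lborel_distr_plus assms)
  then have "integrable lborel (\<lambda>x. f (z + x))"
    by (subst (asm) integrable_distr_eq) (use borel_measurable_integrable[OF assms] in auto)
  then show ?thesis by (simp add: add.commute)
qed

lemma AE_lborel_translate:
  fixes z :: "'a::euclidean_space"
  assumes "AE x in lborel. P x"
  shows "AE x in lborel. P (x + z)"
proof -
  have "AE x in distr lborel borel ((+) z). P x" by (subst lborel_distr_plus) (rule assms)
  then have "AE x in lborel. P (z + x)" by (rule AE_distrD[rotated]) auto
  then show ?thesis by (simp add: add.commute)
qed

lemma nn_integral_indicator_translates:
  fixes S :: "'a::euclidean_space set"
  assumes "S \<in> sets borel"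
  shows "(\<integral>\<^sup>+ x. indicator S x + indicator S (x + z) \<partial>lborel) = 2 * emeasure lborel S"
proof -
  have "(\<integral>\<^sup>+ x. indicator S (x + z) \<partial>lborel) = emeasure lborel S"
    using nn_integral_lborel_translate[of "indicator S" z] assms by simp
  then show ?thesis
    using assms by (simp add: nn_integral_add mult_2)
qed

lemma continuous_AE_bound_imp_bound:
  fixes f :: "'a::euclidean_space \<Rightarrow> real"
  assumes "continuous_on UNIV f" "AE x in lborel. \<bar>f x\<bar> \<le> C"
  shows "\<bar>f x\<bar> \<le> C"
proof (rule ccontr)
  define U where "U = {x. \<bar>f x\<bar> > C}"
  assume "\<not> \<bar>f x\<bar> \<le> C"
  then have "x \<in> U" by (simp add: U_def)
  have "open U" unfolding U_def
    by (rule open_Collect_less) (use assms(1) in \<open>auto intro!: continuous_intros\<close>)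
  then obtain r where r: "r > 0" "ball x r \<subseteq> U"
    using \<open>x \<in> U\<close> open_contains_ball by blast
  have "emeasure lborel U = 0"
    using assms(2) \<open>open U\<close>
    by (subst AE_iff_measurable[symmetric, of U]) (auto simp: U_def not_le)
  moreover have "0 < emeasure lborel (ball x r)"
    using content_ball_pos[OF r(1), of x] emeasure_lborel_ball_finite[of x r]
    by (simp add: emeasure_eq_ennreal_measure)
  moreover have "emeasure lborel (ball x r) \<le> emeasure lborel U"
    using r(2) \<open>open U\<close> by (intro emeasure_mono) auto
  ultimately show False by simp
qed

lemma integrable_mult_bounded:
  fixes f g :: "'a::euclidean_space \<Rightarrow> real"
  assumes f: "integrable lborel f" and [measurable]: "g \<in> borel_measurable borel"
    and g: "\<And>x. \<bar>g x\<bar> \<le> B"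
  shows "integrable lborel (\<lambda>x. f x * g x)"
proof (rule Bochner_Integration.integrable_bound)
  show "integrable lborel (\<lambda>x. B * \<bar>f x\<bar>)" using f by simp
  show "(\<lambda>x. f x * g x) \<in> borel_measurable lborel"
    using borel_measurable_integrable[OF f] by measurable
  show "AE x in lborel. norm (f x * g x) \<le> norm (B * \<bar>f x\<bar>)"
  proof (rule AE_I2)
    fix x
    have "\<bar>f x\<bar> * \<bar>g x\<bar> \<le> \<bar>f x\<bar> * \<bar>B\<bar>"
      using g[of x] by (intro mult_left_mono) auto
    then show "norm (f x * g x) \<le> norm (B * \<bar>f x\<bar>)" by (simp add: abs_mult mult.commute)
  qed
qed

lemma abs_integral_mult_bounded_le:
  fixes f g :: "'a::euclidean_space \<Rightarrow> real"
  assumes f: "integrable lborel f" and [measurable]: "g \<in> borel_measurable borel"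
    and g: "\<And>x. \<bar>g x\<bar> \<le> B"
  shows "\<bar>\<integral>x. f x * g x \<partial>lborel\<bar> \<le> B * (\<integral>x. \<bar>f x\<bar> \<partial>lborel)"
proof -
  have "\<bar>\<integral>x. f x * g x \<partial>lborel\<bar> \<le> (\<integral>x. \<bar>f x * g x\<bar> \<partial>lborel)"
    using integral_norm_bound[of lborel "\<lambda>x. f x * g x"] by simp
  also have "\<dots> \<le> (\<integral>x. B * \<bar>f x\<bar> \<partial>lborel)"
  proof (rule integral_mono)
    show "integrable lborel (\<lambda>x. \<bar>f x * g x\<bar>)"
      using integrable_mult_bounded[OF f _ g] by simp
    show "integrable lborel (\<lambda>x. B * \<bar>f x\<bar>)" using f by simp
    show "\<bar>f x * g x\<bar> \<le> B * \<bar>f x\<bar>" for x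
      using mult_left_mono[OF g[of x], of "\<bar>f x\<bar>"] by (simp add: abs_mult mult.commute)
  qed
  finally show ?thesis by simp
qed

lemma le_mult_indicator_translates:
  fixes c :: ennreal
  assumes "x \<in> S \<or> x + z \<in> S"
  shows "c \<le> c * (indicator S x + indicator S (x + z))"
proof -
  have "1 \<le> (indicator S x + indicator S (x + z) :: ennreal)"
    using assms by (auto simp: indicator_def)
  then show ?thesis using mult_left_mono[of 1 _ c] by simp
qed

lemma has_compact_supportE:
  assumes "has_compact_support f"
  obtains S where "compact S" "\<And>x. x \<notin> S \<Longrightarrow> f x = 0"
  using assms closure_subset[of "{x. f x \<noteq> 0}"] unfolding has_compact_support_def by blast

lemma diff_product_vanishes_off_compact:
  fixes \<psi> \<phi> :: "'a::euclidean_space \<Rightarrow> real"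
  assumes "has_compact_support \<psi> \<or> has_compact_support \<phi>"
  obtains S where "compact S"
    "\<And>x z. x \<notin> S \<Longrightarrow> x + z \<notin> S \<Longrightarrow> \<bar>\<psi> (x + z) - \<psi> x\<bar> * \<bar>\<phi> (x + z) - \<phi> x\<bar> = 0"
  using assms by (elim disjE has_compact_supportE) auto

lemma lipschitz_bounded_diff_le:
  fixes \<phi> :: "'a::euclidean_space \<Rightarrow> real"
  assumes "L-lipschitz_on UNIV \<phi>" "\<And>x. \<bar>\<phi> x\<bar> \<le> C"
  shows "\<bar>\<phi> (x + z) - \<phi> x\<bar> \<le> max L (2 * C) * min (norm z) 1"
proof (cases "norm z \<le> 1")
  case True
  have "\<bar>\<phi> (x + z) - \<phi> x\<bar> \<le> L * norm z"
    using lipschitz_onD[OF assms(1), of "x + z" x] by (simp add: dist_norm)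
  also have "\<dots> \<le> max L (2 * C) * norm z" by (intro mult_right_mono) auto
  finally show ?thesis using True by simp
next
  case False
  have "\<bar>\<phi> (x + z) - \<phi> x\<bar> \<le> 2 * C" using assms(2)[of "x + z"] assms(2)[of x] by linarith
  then show ?thesis using False by simp
qed

lemma power2_min_one:
  fixes a :: real
  assumes "0 \<le> a"
  shows "(min a 1)\<^sup>2 = min (a\<^sup>2) 1"
proof (cases "a \<le> 1")
  case True
  then show ?thesis using assms by (simp add: power_le_one)
next
  case False
  then have "1 \<le> a\<^sup>2" by (simp add: one_le_power)
  with False show ?thesis by (simp add: min_absorb2)
qed

lemma abs_mult_le_sum_squares: "\<bar>a::real\<bar> * \<bar>b\<bar> \<le> a\<^sup>2 + b\<^sup>2"
proof -
  have "2 * (\<bar>a\<bar> * \<bar>b\<bar>) \<le> a\<^sup>2 + b\<^sup>2"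
    using sum_squares_bound[of "\<bar>a\<bar>" "\<bar>b\<bar>"] by (simp add: mult.assoc)
  moreover have "0 \<le> \<bar>a\<bar> * \<bar>b\<bar>" by simp
  ultimately show ?thesis by linarith
qed

section \<open>Levy measures\<close>

lemma levy_measure_sigma_finite:
  fixes \<mu> :: "'a::euclidean_space measure"
  assumes "levy_measure \<mu>"
  shows "sigma_finite_measure \<mu>"
proof -
  have sets: "sets \<mu> = sets borel" and zero: "emeasure \<mu> {0} = 0"
    and compact: "\<And>K. compact K \<Longrightarrow> 0 \<notin> K \<Longrightarrow> emeasure \<mu> K < \<infinity>"
    using assms unfolding levy_measure_def by auto
  define A where "A n = {x::'a. 1 / Suc n \<le> norm x \<and> norm x \<le> Suc n}" for n
  have A_compact: "compact (A n)" for n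
    unfolding A_def compact_eq_bounded_closed
    by (intro conjI bounded_subset[OF bounded_cball[of 0 "Suc n"]] closed_Collect_conj
        closed_Collect_le continuous_intros) auto
  have "0 \<notin> A n" for n by (simp add: A_def)
  then have fin: "emeasure \<mu> (A n) < \<infinity>" for n using compact A_compact by blast
  have "\<exists>n. x \<in> A n" if "x \<noteq> 0" for x :: 'a
  proof -
    obtain n where n: "inverse (Suc n) < norm x"
      using \<open>x \<noteq> 0\<close> reals_Archimedean zero_less_norm_iff by blast
    obtain m :: nat where m: "norm x \<le> m" using real_arch_simple by blast
    have "1 / real (Suc (max n m)) \<le> 1 / real (Suc n)" by (intro divide_left_mono) auto
    also have "\<dots> < norm x" using n by (simp add: inverse_eq_divide)
    finally have "1 / real (Suc (max n m)) \<le> norm x" by simp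
    moreover have "real m \<le> real (Suc (max n m))" by simp
    ultimately show ?thesis using m by (intro exI[of _ "max n m"]) (simp add: A_def)
  qed
  then have cover: "insert {0} (range A) \<subseteq> sets \<mu> \<and> \<Union> (insert {0} (range A)) = space \<mu>"
    using sets_eq_imp_space_eq[OF sets] A_compact by (auto simp: sets borel_compact) blast
  show ?thesis
    by unfold_locales
      (use cover fin zero in \<open>intro exI[of _ "insert {0} (range A)"], auto simp: less_top\<close>)
qed

lemma levy_measure_finite_measure:
  fixes \<mu> :: "'a::euclidean_space measure"
  assumes "levy_measure \<mu>" "emeasure \<mu> (UNIV - {0}) < \<infinity>"
  shows "finite_measure \<mu>"
proof
  have sets: "sets \<mu> = sets borel" and zero: "emeasure \<mu> {0} = 0"
    using assms(1) unfolding levy_measure_def by auto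
  have "emeasure \<mu> (space \<mu>) = emeasure \<mu> (UNIV - {0}) + emeasure \<mu> {0}"
    using sets_eq_imp_space_eq[OF sets] sets by (subst plus_emeasure) auto
  then show "emeasure \<mu> (space \<mu>) \<noteq> \<infinity>" using assms(2) zero by simp
qed

lemma sets_lborel_pair_borel:
  fixes \<mu> :: "'a::euclidean_space measure"
  assumes "sets \<mu> = sets borel"
  shows "borel_measurable (lborel \<Otimes>\<^sub>M \<mu>) = borel_measurable (borel \<Otimes>\<^sub>M borel)"
  using assms by (intro measurable_cong_sets sets_pair_measure_cong) auto

lemma borel_measurable_nn_integral_borel:
  fixes \<mu> :: "'a::euclidean_space measure" and f :: "'a \<Rightarrow> 'a \<Rightarrow> ennreal"
  assumes "sigma_finite_measure \<mu>" "sets \<mu> = sets borel"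
    and "(\<lambda>(x, z). f x z) \<in> borel_measurable (borel \<Otimes>\<^sub>M borel)"
  shows "(\<lambda>x. \<integral>\<^sup>+ z. f x z \<partial>\<mu>) \<in> borel_measurable borel"
proof -
  interpret sigma_finite_measure \<mu> by fact
  have "(\<lambda>x. \<integral>\<^sup>+ z. f x z \<partial>\<mu>) \<in> borel_measurable lborel"
    using assms(3) by (intro borel_measurable_nn_integral) (simp only: sets_lborel_pair_borel[OF assms(2)])
  then show ?thesis by simp
qed

lemma nn_integral_swap_borel:
  fixes \<mu> :: "'a::euclidean_space measure" and f :: "'a \<Rightarrow> 'a \<Rightarrow> ennreal"
  assumes "sigma_finite_measure \<mu>" "sets \<mu> = sets borel"
    and "(\<lambda>(x, z). f x z) \<in> borel_measurable (borel \<Otimes>\<^sub>M borel)"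
  shows "(\<integral>\<^sup>+ x. \<integral>\<^sup>+ z. f x z \<partial>\<mu> \<partial>lborel) = (\<integral>\<^sup>+ z. \<integral>\<^sup>+ x. f x z \<partial>lborel \<partial>\<mu>)"
proof -
  interpret sigma_finite_measure \<mu> by fact
  interpret pair_sigma_finite lborel \<mu> ..
  have "(\<lambda>(x, z). f x z) \<in> borel_measurable (lborel \<Otimes>\<^sub>M \<mu>)"
    using assms(3) by (simp only: sets_lborel_pair_borel[OF assms(2)])
  from Fubini[OF this] show ?thesis by simp
qed

section \<open>Test functions\<close>

text \<open>Only the directional derivatives are required to be continuous; in finite dimension this
  already gives a continuous derivative, see \<open>C1_function_blinfunE\<close>.\<close>

definition C1_function :: "('a::euclidean_space \<Rightarrow> real) \<Rightarrow> bool" where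
  "C1_function f \<longleftrightarrow> (\<exists>Df. (\<forall>x. (f has_derivative Df x) (at x)) \<and> (\<forall>v. continuous_on UNIV (\<lambda>x. Df x v)))"

lemma C1_function_continuous: "C1_function f \<Longrightarrow> continuous_on UNIV f"
  unfolding C1_function_def
  by (meson continuous_at_imp_continuous_on differentiableI differentiable_imp_continuous_within)

lemma C1_function_const: "C1_function (\<lambda>x. c)"
  unfolding C1_function_def by (intro exI[of _ "\<lambda>x v. 0"]) auto

lemma C1_function_linear: "bounded_linear f \<Longrightarrow> C1_function f"
  unfolding C1_function_def by (intro exI[of _ "\<lambda>x. f"]) (auto intro: bounded_linear_imp_has_derivative)

lemma C1_function_add:
  assumes "C1_function f" "C1_function g"
  shows "C1_function (\<lambda>x. f x + g x)"
proof -
  obtain Df where Df: "\<And>x. (f has_derivative Df x) (at x)" "\<And>v. continuous_on UNIV (\<lambda>x. Df x v)"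
    using assms(1) unfolding C1_function_def by blast
  obtain Dg where Dg: "\<And>x. (g has_derivative Dg x) (at x)" "\<And>v. continuous_on UNIV (\<lambda>x. Dg x v)"
    using assms(2) unfolding C1_function_def by blast
  show ?thesis unfolding C1_function_def
    by (rule exI[of _ "\<lambda>x v. Df x v + Dg x v"]) (auto intro!: has_derivative_add Df Dg continuous_intros)
qed

lemma C1_function_mult:
  assumes "C1_function f" "C1_function g"
  shows "C1_function (\<lambda>x. f x * g x)"
proof -
  obtain Df where Df: "\<And>x. (f has_derivative Df x) (at x)" "\<And>v. continuous_on UNIV (\<lambda>x. Df x v)"
    using assms(1) unfolding C1_function_def by blast
  obtain Dg where Dg: "\<And>x. (g has_derivative Dg x) (at x)" "\<And>v. continuous_on UNIV (\<lambda>x. Dg x v)"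
    using assms(2) unfolding C1_function_def by blast
  have "continuous_on UNIV f" "continuous_on UNIV g"
    using assms by (simp_all add: C1_function_continuous)
  then show ?thesis unfolding C1_function_def
    by (intro exI[of _ "\<lambda>x v. f x * Dg x v + Df x v * g x"])
      (auto intro!: has_derivative_mult Df Dg continuous_intros)
qed

lemma C1_function_real_polynomial: "real_polynomial_function p \<Longrightarrow> C1_function p"
  by (induction p rule: real_polynomial_function.induct)
    (auto intro: C1_function_linear C1_function_const C1_function_add C1_function_mult)

lemma C1_function_blinfunE:
  fixes h :: "'a::euclidean_space \<Rightarrow> real"
  assumes "C1_function h"
  obtains B :: "'a \<Rightarrow> 'a \<Rightarrow>\<^sub>L real"
  where "\<And>x. (h has_derivative blinfun_apply (B x)) (at x)" "continuous_on UNIV B"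
proof -
  obtain Dh where Dh: "\<And>x. (h has_derivative Dh x) (at x)" "\<And>v. continuous_on UNIV (\<lambda>x. Dh x v)"
    using assms unfolding C1_function_def by blast
  define B where "B x = Blinfun (Dh x)" for x
  have B: "blinfun_apply (B x) = Dh x" for x
    unfolding B_def using bounded_linear_Blinfun_apply[OF has_derivative_bounded_linear[OF Dh(1)]] .
  have "continuous_on UNIV B"
    by (rule continuous_on_blinfun_componentwise) (simp add: B Dh(2))
  with Dh(1) show ?thesis by (intro that[of B]) (simp_all add: B)
qed

lemma has_real_derivative_max0_power2:
  "((\<lambda>s::real. (max 0 s)\<^sup>2) has_real_derivative (2 * max 0 s)) (at s)"
proof -
  consider "s > 0" | "s < 0" | "s = 0" by linarith
  then show ?thesis
  proof cases
    case 1
    have "((\<lambda>s::real. s\<^sup>2) has_real_derivative (2 * s)) (at s)"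
      by (auto intro!: derivative_eq_intros)
    then show ?thesis
      using 1 by (subst has_field_derivative_transform_within_open[of _ _ _ "{0<..}"]) auto
  next
    case 2
    have "((\<lambda>s::real. 0) has_real_derivative 0) (at s)" by simp
    then show ?thesis
      using 2 by (subst has_field_derivative_transform_within_open[of _ _ _ "{..<0}"]) auto
  next
    case 3
    have "((\<lambda>y. ((max 0 y)\<^sup>2 - (max 0 0)\<^sup>2) / (y - 0)) \<longlongrightarrow> (0::real)) (at 0)"
    proof (rule Lim_null_comparison)
      show "\<forall>\<^sub>F y in at 0. norm (((max 0 y)\<^sup>2 - (max 0 0)\<^sup>2) / (y - 0)) \<le> \<bar>y\<bar>"
        by (intro always_eventually allI) (auto simp: power2_eq_square abs_mult max_def)
      show "((\<lambda>y::real. \<bar>y\<bar>) \<longlongrightarrow> 0) (at 0)"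
        using tendsto_rabs[OF tendsto_ident_at[of "0::real" UNIV]] by simp
    qed
    then show ?thesis using 3 by (simp add: has_field_derivative_iff)
  qed
qed

definition bump :: "real \<Rightarrow> 'a::euclidean_space \<Rightarrow> real" where
  "bump R x = (max 0 (1 - (x \<bullet> x) / R\<^sup>2))\<^sup>2"

lemma C1_function_bump: "C1_function (bump R)"
proof -
  define m' where "m' s = 2 * max 0 (s::real)" for s
  have "((\<lambda>s. (max 0 s)\<^sup>2) has_derivative (*) (m' s)) (at s)" for s
    using has_real_derivative_max0_power2[of s] unfolding m'_def has_field_derivative_def .
  moreover have "((\<lambda>x. 1 - (x \<bullet> x) / R\<^sup>2) has_derivative (\<lambda>v. - (2 * (x \<bullet> v)) / R\<^sup>2)) (at x)" for x :: 'a
  proof -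
    have "((\<lambda>x. 1 - inverse (R\<^sup>2) * (x \<bullet> x)) has_derivative (\<lambda>v. - (inverse (R\<^sup>2) * (v \<bullet> x + x \<bullet> v)))) (at x)"
      by (auto intro!: derivative_eq_intros)
    then show ?thesis by (simp add: divide_inverse inner_commute mult.commute)
  qed
  ultimately have "(bump R has_derivative (\<lambda>v. m' (1 - (x \<bullet> x) / R\<^sup>2) * (- (2 * (x \<bullet> v)) / R\<^sup>2))) (at x)"
    for x :: 'a
    unfolding bump_def[abs_def] by (rule has_derivative_compose[rotated])
  moreover have "continuous_on UNIV (\<lambda>x::'a. m' (1 - (x \<bullet> x) / R\<^sup>2) * (- (2 * (x \<bullet> v)) / R\<^sup>2))" for v
    unfolding m'_def divide_inverse by (intro continuous_intros)
  ultimately show ?thesis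
    unfolding C1_function_def
    by (intro exI[of _ "\<lambda>x v. m' (1 - (x \<bullet> x) / R\<^sup>2) * (- (2 * (x \<bullet> v)) / R\<^sup>2)"]) simp
qed

lemma bump_nonneg: "0 \<le> bump R x"
  by (simp add: bump_def)

lemma bump_le_one: "bump R x \<le> 1"
proof -
  have "0 \<le> (x \<bullet> x) / R\<^sup>2" by simp
  then show ?thesis unfolding bump_def by (simp add: power_le_one)
qed

lemma bump_eq_0:
  assumes "0 < R" "R < norm x"
  shows "bump R x = 0"
proof -
  have "R\<^sup>2 < x \<bullet> x" using assms by (simp add: power_strict_mono flip: power2_norm_eq_inner)
  then show ?thesis using assms by (simp add: bump_def field_simps)
qed

lemma bump_tendsto_one: "(\<lambda>n. bump (real (Suc n)) x) \<longlonglongrightarrow> 1"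
proof -
  have "(\<lambda>n. inverse (real (Suc n))) \<longlonglongrightarrow> 0" by (rule LIMSEQ_inverse_real_of_nat)
  then have "(\<lambda>n. (inverse (real (Suc n)))\<^sup>2) \<longlonglongrightarrow> 0\<^sup>2" by (intro tendsto_power)
  then have "(\<lambda>n. inverse ((real (Suc n))\<^sup>2)) \<longlonglongrightarrow> 0" unfolding power_inverse by simp
  moreover have "isCont (\<lambda>t. (max 0 (1 - (x \<bullet> x) * t))\<^sup>2) 0" by (intro continuous_intros)
  ultimately have "(\<lambda>n. (max 0 (1 - (x \<bullet> x) * inverse ((real (Suc n))\<^sup>2)))\<^sup>2) \<longlonglongrightarrow> 1"
    using isCont_tendsto_compose by fastforce
  then show ?thesis unfolding bump_def divide_inverse .
qed

definition unit_test_function :: "('a::euclidean_space \<Rightarrow> real) \<Rightarrow> bool" where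
  "unit_test_function h \<longleftrightarrow>
     C1_function h \<and> (\<exists>S. compact S \<and> (\<forall>x. x \<notin> S \<longrightarrow> h x = 0)) \<and> (\<forall>x. \<bar>h x\<bar> \<le> 1)"

lemma unit_test_function_uminus:
  assumes "unit_test_function h"
  shows "unit_test_function (\<lambda>x. - h x)"
proof -
  have "C1_function (\<lambda>x. (- 1) * h x)"
    using assms by (intro C1_function_mult C1_function_const) (simp add: unit_test_function_def)
  then show ?thesis using assms by (simp add: unit_test_function_def)
qed

lemma unit_test_function_bump_polynomial:
  assumes "0 < R" "real_polynomial_function p" "\<And>x. x \<in> cball 0 R \<Longrightarrow> \<bar>p x\<bar> \<le> 5/4"
  shows "unit_test_function (\<lambda>x. 4/5 * (bump R x * p x))"
  unfolding unit_test_function_def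
proof (intro conjI exI allI impI)
  show "C1_function (\<lambda>x. 4/5 * (bump R x * p x))"
    using assms(2)
    by (intro C1_function_mult C1_function_const C1_function_bump C1_function_real_polynomial)
  show "compact (cball (0::'a) R)" by simp
  show "4/5 * (bump R x * p x) = 0" if "x \<notin> cball 0 R" for x
    using that bump_eq_0[OF assms(1), of x] by (simp add: not_le)
  show "\<bar>4/5 * (bump R x * p x)\<bar> \<le> 1" for x
  proof (cases "x \<in> cball 0 R")
    case True
    have "\<bar>bump R x\<bar> * \<bar>p x\<bar> \<le> 1 * (5/4)"
      using assms(3)[OF True] bump_nonneg[of R x] bump_le_one[of R x] by (intro mult_mono) auto
    then show ?thesis by (simp add: abs_mult)
  qed (use bump_eq_0[OF assms(1), of x] in \<open>simp add: not_le\<close>)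
qed

lemma L1_norm_approx_continuous:
  fixes f :: "'a::euclidean_space \<Rightarrow> real"
  assumes f: "integrable lborel f" and e: "e > 0"
  obtains u where "continuous_on UNIV u" "\<And>x. \<bar>u x\<bar> \<le> 1"
    "(\<integral>x. \<bar>f x\<bar> \<partial>lborel) - e < (\<integral>x. f x * u x \<partial>lborel)"
proof -
  have fm[measurable]: "f \<in> borel_measurable borel" using borel_measurable_integrable[OF f] by simp
  have "(\<lambda>x. sgn (f x)) \<in> borel_measurable lborel" by measurable
  then have "(\<lambda>x. sgn (f x)) measurable_on UNIV"
    by (simp add: measurable_on_iff_borel_measurable measurable_completion measurable_restrict_space1)
  then obtain N g where N: "negligible N" and gc: "\<And>n. continuous_on UNIV (g n)"
    and gl: "\<And>x. x \<notin> N \<Longrightarrow> (\<lambda>n. g n x) \<longlonglongrightarrow> sgn (f x)"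
    unfolding measurable_on_def by auto
  define u where "u n x = max (-1) (min 1 (g n x))" for n x
  have uc: "continuous_on UNIV (u n)" for n unfolding u_def by (intro continuous_intros gc)
  have ub: "\<bar>u n x\<bar> \<le> 1" for n x unfolding u_def by auto
  have "AE x in lebesgue. x \<notin> N" using N by (intro AE_not_in) (simp add: negligible_iff_null_sets)
  then have "AE x in lborel. (\<lambda>n. f x * u n x) \<longlonglongrightarrow> \<bar>f x\<bar>"
    unfolding AE_completion_iff
  proof eventually_elim
    case (elim x)
    have "(\<lambda>n. u n x) \<longlonglongrightarrow> max (-1) (min 1 (sgn (f x)))"
      unfolding u_def by (intro tendsto_max tendsto_min tendsto_const gl elim)
    also have "max (-1) (min 1 (sgn (f x))) = sgn (f x)" by (simp add: sgn_real_def)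
    finally have "(\<lambda>n. f x * u n x) \<longlonglongrightarrow> f x * sgn (f x)" by (rule tendsto_mult[OF tendsto_const])
    then show ?case by (metis abs_sgn)
  qed
  moreover have [measurable]: "u n \<in> borel_measurable borel" for n by (rule borel_measurable_continuous_onI[OF uc])
  ultimately have "(\<lambda>n. \<integral>x. f x * u n x \<partial>lborel) \<longlonglongrightarrow> (\<integral>x. \<bar>f x\<bar> \<partial>lborel)"
    using f ub by (intro integral_dominated_convergence[where w = "\<lambda>x. \<bar>f x\<bar>"])
      (auto simp: abs_mult mult_left_le)
  then have "\<forall>\<^sub>F n in sequentially. (\<integral>x. \<bar>f x\<bar> \<partial>lborel) - e < (\<integral>x. f x * u n x \<partial>lborel)"
    by (rule order_tendstoD) (use e in simp)
  then obtain n where "(\<integral>x. \<bar>f x\<bar> \<partial>lborel) - e < (\<integral>x. f x * u n x \<partial>lborel)"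
    by (auto simp: eventually_sequentially)
  then show ?thesis using that uc ub by blast
qed

lemma integral_mult_bump_tendsto:
  fixes f u :: "'a::euclidean_space \<Rightarrow> real"
  assumes f: "integrable lborel f" and [measurable]: "u \<in> borel_measurable borel"
    and u: "\<And>x. \<bar>u x\<bar> \<le> 1"
  shows "(\<lambda>k. \<integral>x. f x * u x * bump (real (Suc k)) x \<partial>lborel) \<longlonglongrightarrow> (\<integral>x. f x * u x \<partial>lborel)"
proof (rule integral_dominated_convergence[where w = "\<lambda>x. \<bar>f x\<bar>"])
  have [measurable]: "f \<in> borel_measurable borel" using borel_measurable_integrable[OF f] by simp
  have [measurable]: "bump R \<in> borel_measurable borel" for R :: real
    by (intro borel_measurable_continuous_onI C1_function_continuous C1_function_bump)
  show "(\<lambda>x. f x * u x) \<in> borel_measurable lborel"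
    "(\<lambda>x. f x * u x * bump (real (Suc k)) x) \<in> borel_measurable lborel" for k
    by measurable
  show "integrable lborel (\<lambda>x. \<bar>f x\<bar>)" using f by simp
  show "AE x in lborel. (\<lambda>k. f x * u x * bump (real (Suc k)) x) \<longlonglongrightarrow> f x * u x"
    using tendsto_mult[OF tendsto_const bump_tendsto_one] by (intro AE_I2) force
  show "AE x in lborel. norm (f x * u x * bump (real (Suc k)) x) \<le> \<bar>f x\<bar>" for k
  proof (rule AE_I2)
    fix x
    have "\<bar>u x * bump (real (Suc k)) x\<bar> \<le> 1"
      using u[of x] bump_nonneg[of "real (Suc k)" x] bump_le_one[of "real (Suc k)" x]
      by (simp add: abs_mult mult_le_one)
    then show "norm (f x * u x * bump (real (Suc k)) x) \<le> \<bar>f x\<bar>"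
      by (simp add: abs_mult mult_left_le mult.assoc)
  qed
qed

text \<open>The factor \<open>4/5\<close> keeps the cut-off polynomial bounded by \<open>1\<close> although it approximates \<open>u\<close>
  only up to \<open>1/4\<close>; this is why only \<open>3/5\<close> of the \<open>L\<^sup>1\<close> norm is recovered below.\<close>

lemma unit_test_function_bump_polynomial_approx:
  fixes f u :: "'a::euclidean_space \<Rightarrow> real"
  assumes f: "integrable lborel f" and u_cont: "continuous_on UNIV u" and u_le: "\<And>x. \<bar>u x\<bar> \<le> 1"
    and "0 < R"
  obtains h where "unit_test_function h"
    "4/5 * (\<integral>x. f x * (u x * bump R x) \<partial>lborel) - 1/5 * (\<integral>x. \<bar>f x\<bar> \<partial>lborel) \<le> (\<integral>x. f x * h x \<partial>lborel)"
proof -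
  obtain p where p: "real_polynomial_function p" and p_approx: "\<And>x. x \<in> cball 0 R \<Longrightarrow> \<bar>u x - p x\<bar> < 1/4"
    using Stone_Weierstrass_real_polynomial_function[of "cball 0 R" u "1/4"] u_cont
    by (auto intro: continuous_on_subset)
  define h where "h x = 4/5 * (bump R x * p x)" for x
  have "\<bar>p x\<bar> \<le> 5/4" if "x \<in> cball 0 R" for x
    using p_approx[OF that] u_le[of x] by linarith
  then have "unit_test_function h"
    unfolding h_def by (rule unit_test_function_bump_polynomial[OF \<open>0 < R\<close> p])
  have small: "\<bar>bump R x * (p x - u x)\<bar> \<le> 1/4" for x
  proof (cases "x \<in> cball 0 R")
    case True
    have "bump R x * \<bar>p x - u x\<bar> \<le> 1 * (1/4)"
      using p_approx[OF True] bump_nonneg[of R x] bump_le_one[of R x]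
      by (intro mult_mono) (auto simp: abs_minus_commute)
    then show ?thesis by (simp add: abs_mult bump_nonneg)
  qed (use bump_eq_0[OF \<open>0 < R\<close>, of x] in \<open>simp add: not_le\<close>)
  have [measurable]: "u \<in> borel_measurable borel" "bump R \<in> borel_measurable borel" "p \<in> borel_measurable borel"
    using u_cont C1_function_bump C1_function_real_polynomial[OF p]
    by (auto intro: borel_measurable_continuous_onI C1_function_continuous)
  have i1: "integrable lborel (\<lambda>x. f x * (u x * bump R x))"
    by (intro integrable_mult_bounded[OF f, of _ 1])
      (use u_le in \<open>auto simp: abs_mult bump_nonneg bump_le_one intro!: mult_le_one\<close>)
  have i2: "integrable lborel (\<lambda>x. f x * (bump R x * (p x - u x)))"
    by (rule integrable_mult_bounded[OF f _ small]) measurable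
  have "(\<integral>x. f x * h x \<partial>lborel)
      = (\<integral>x. 4/5 * (f x * (u x * bump R x) + f x * (bump R x * (p x - u x))) \<partial>lborel)"
    by (rule Bochner_Integration.integral_cong) (simp_all add: h_def algebra_simps)
  also have "\<dots> = 4/5 * (\<integral>x. f x * (u x * bump R x) \<partial>lborel) + 4/5 * (\<integral>x. f x * (bump R x * (p x - u x)) \<partial>lborel)"
    using i1 i2 by simp
  finally have eq: "(\<integral>x. f x * h x \<partial>lborel)
      = 4/5 * (\<integral>x. f x * (u x * bump R x) \<partial>lborel) + 4/5 * (\<integral>x. f x * (bump R x * (p x - u x)) \<partial>lborel)" .
  have "\<bar>\<integral>x. f x * (bump R x * (p x - u x)) \<partial>lborel\<bar> \<le> 1/4 * (\<integral>x. \<bar>f x\<bar> \<partial>lborel)"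
    by (rule abs_integral_mult_bounded_le[OF f _ small]) measurable
  then have "4/5 * (\<integral>x. f x * (u x * bump R x) \<partial>lborel) - 1/5 * (\<integral>x. \<bar>f x\<bar> \<partial>lborel) \<le> (\<integral>x. f x * h x \<partial>lborel)"
    unfolding eq by linarith
  with \<open>unit_test_function h\<close> show ?thesis by (rule that)
qed

lemma unit_test_function_L1_approx:
  fixes f :: "'a::euclidean_space \<Rightarrow> real"
  assumes f: "integrable lborel f" and e: "e > 0"
  obtains h where "unit_test_function h" "3/5 * (\<integral>x. \<bar>f x\<bar> \<partial>lborel) - e \<le> (\<integral>x. f x * h x \<partial>lborel)"
proof -
  obtain u where u_cont: "continuous_on UNIV u" and u_le: "\<And>x. \<bar>u x\<bar> \<le> 1"
    and u_approx: "(\<integral>x. \<bar>f x\<bar> \<partial>lborel) - e/4 < (\<integral>x. f x * u x \<partial>lborel)"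
    using L1_norm_approx_continuous[OF f, of "e/4"] e by auto
  have [measurable]: "u \<in> borel_measurable borel" by (rule borel_measurable_continuous_onI[OF u_cont])
  have "(\<lambda>k. \<integral>x. f x * u x * bump (real (Suc k)) x \<partial>lborel) \<longlonglongrightarrow> (\<integral>x. f x * u x \<partial>lborel)"
    by (rule integral_mult_bump_tendsto[OF f _ u_le]) measurable
  then have "\<forall>\<^sub>F k in sequentially. (\<integral>x. f x * u x \<partial>lborel) - e/4 < (\<integral>x. f x * u x * bump (real (Suc k)) x \<partial>lborel)"
    by (rule order_tendstoD) (use e in simp)
  then obtain k where k: "(\<integral>x. f x * u x \<partial>lborel) - e/4 < (\<integral>x. f x * u x * bump (real (Suc k)) x \<partial>lborel)"
    by (auto simp: eventually_sequentially)
  obtain h where "unit_test_function h"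
    and "4/5 * (\<integral>x. f x * (u x * bump (real (Suc k)) x) \<partial>lborel) - 1/5 * (\<integral>x. \<bar>f x\<bar> \<partial>lborel)
      \<le> (\<integral>x. f x * h x \<partial>lborel)"
    using unit_test_function_bump_polynomial_approx[OF f u_cont u_le, of "real (Suc k)"] by auto
  moreover have "3/5 * (\<integral>x. \<bar>f x\<bar> \<partial>lborel) - e
      \<le> 4/5 * (\<integral>x. f x * (u x * bump (real (Suc k)) x) \<partial>lborel) - 1/5 * (\<integral>x. \<bar>f x\<bar> \<partial>lborel)"
    using u_approx k e by (simp add: mult.assoc)
  ultimately show ?thesis using that by fastforce
qed

section \<open>Functions of bounded variation\<close>

lemma has_integral_derivative_segment:
  fixes h :: "'a::euclidean_space \<Rightarrow> real"
  assumes Dh: "\<And>x. (h has_derivative Dh x) (at x)"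
  shows "((\<lambda>t. Dh (x - t *\<^sub>R z) z) has_integral (h x - h (x - z))) {0..1}"
proof -
  have "((\<lambda>t. - Dh (x - t *\<^sub>R z) z) has_integral (h (x - 1 *\<^sub>R z) - h (x - 0 *\<^sub>R z))) {0..1}"
  proof (rule fundamental_theorem_of_calculus)
    fix t :: real
    have "((\<lambda>t. x - t *\<^sub>R z) has_derivative (\<lambda>s. - (s *\<^sub>R z))) (at t within {0..1})"
      by (auto intro!: derivative_eq_intros)
    from has_derivative_compose[OF this Dh]
    have "((\<lambda>t. h (x - t *\<^sub>R z)) has_derivative (\<lambda>s. Dh (x - t *\<^sub>R z) (- (s *\<^sub>R z)))) (at t within {0..1})" .
    moreover have "(\<lambda>s. Dh (x - t *\<^sub>R z) (- (s *\<^sub>R z))) = (\<lambda>s. s *\<^sub>R (- Dh (x - t *\<^sub>R z) z))"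
      using has_derivative_bounded_linear[OF Dh[of "x - t *\<^sub>R z"]] by (simp add: linear_simps)
    ultimately show "((\<lambda>t. h (x - t *\<^sub>R z)) has_vector_derivative - Dh (x - t *\<^sub>R z) z) (at t within {0..1})"
      by (simp add: has_vector_derivative_def)
  qed simp
  from has_integral_neg[OF this] show ?thesis by simp
qed

lemma integrable_on_segment:
  fixes f :: "'a::euclidean_space \<Rightarrow> 'b::banach"
  assumes "continuous_on UNIV f"
  shows "(\<lambda>t. f (x - t *\<^sub>R z)) integrable_on cbox 0 1"
proof (rule integrable_continuous)
  have "continuous_on (cbox 0 1) (\<lambda>t::real. x - t *\<^sub>R z)" by (intro continuous_intros)
  from continuous_on_compose2[OF assms this]
  show "continuous_on (cbox 0 1) (\<lambda>t. f (x - t *\<^sub>R z))" by simp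
qed

lemma line_average_has_derivative:
  fixes h :: "'a::euclidean_space \<Rightarrow> real"
  assumes "C1_function h"
  obtains DH :: "'a \<Rightarrow> 'a \<Rightarrow>\<^sub>L real" where
    "\<And>x. ((\<lambda>x. integral (cbox 0 1) (\<lambda>t. h (x - t *\<^sub>R z))) has_derivative blinfun_apply (DH x)) (at x)"
    "continuous_on UNIV DH" "\<And>x. DH x z = h x - h (x - z)"
proof -
  obtain B where B: "\<And>x. (h has_derivative blinfun_apply (B x)) (at x)" and B_cont: "continuous_on UNIV B"
    using C1_function_blinfunE[OF assms] by metis
  define DH where "DH x = integral (cbox 0 1) (\<lambda>t::real. B (x - t *\<^sub>R z))" for x
  have B_cont2: "continuous_on (UNIV \<times> cbox 0 1) (\<lambda>(x, t::real). B (x - t *\<^sub>R z))"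
  proof -
    have "continuous_on (UNIV \<times> cbox 0 1) (\<lambda>p::'a \<times> real. fst p - snd p *\<^sub>R z)"
      by (intro continuous_intros)
    from continuous_on_compose2[OF B_cont this] show ?thesis by (simp add: case_prod_beta)
  qed
  have "((\<lambda>x. h (x - t *\<^sub>R z)) has_derivative blinfun_apply (B (x - t *\<^sub>R z))) (at x within UNIV)" for x t
  proof -
    have "((\<lambda>x. x - t *\<^sub>R z) has_derivative (\<lambda>v. v)) (at x)"
      by (auto intro!: derivative_eq_intros)
    from has_derivative_compose[OF this B] show ?thesis by simp
  qed
  moreover have "(\<lambda>t. h (x - t *\<^sub>R z)) integrable_on cbox 0 1" for x
    using C1_function_continuous[OF assms] by (rule integrable_on_segment)
  ultimately have "((\<lambda>x. integral (cbox 0 1) (\<lambda>t. h (x - t *\<^sub>R z))) has_derivative blinfun_apply (DH x)) (at x)" for x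
    using leibniz_rule[of UNIV 0 1 "\<lambda>x t. h (x - t *\<^sub>R z)" "\<lambda>x t. B (x - t *\<^sub>R z)" x, OF _ _ B_cont2]
    by (simp add: DH_def)
  moreover have "continuous_on UNIV DH"
    unfolding DH_def[abs_def] by (rule integral_continuous_on_param[OF B_cont2])
  moreover have "DH x z = h x - h (x - z)" for x
  proof -
    have "(\<lambda>t. B (x - t *\<^sub>R z)) integrable_on cbox 0 1"
      using B_cont by (rule integrable_on_segment)
    from integral_linear[OF this blinfun.bounded_linear_left]
    have "DH x z = integral {0..1} (\<lambda>t. B (x - t *\<^sub>R z) z)"
      by (simp add: DH_def o_def)
    then show ?thesis using has_integral_derivative_segment[OF B] by (simp add: integral_unique)
  qed
  ultimately show ?thesis by (rule that)
qed

lemma C1_field_scaled_direction: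
  fixes H :: "'a::euclidean_space \<Rightarrow> real" and z :: 'a
  assumes H: "\<And>x. (H has_derivative blinfun_apply (DH x)) (at x)" and DH: "continuous_on UNIV DH"
    and "z \<noteq> 0"
  shows "C1_field (\<lambda>x. (H x / norm z) *\<^sub>R z)"
    and "divergence (\<lambda>x. (H x / norm z) *\<^sub>R z) x = DH x z / norm z"
proof -
  define DG where "DG x = Blinfun (\<lambda>v. (DH x v / norm z) *\<^sub>R z)" for x
  have "bounded_linear (\<lambda>v. (DH x v / norm z) *\<^sub>R z)" for x
    using bounded_linear_compose[OF bounded_linear_divide blinfun.bounded_linear_right]
    by (rule bounded_linear_compose[OF bounded_linear_scaleR_left])
  then have DG: "blinfun_apply (DG x) = (\<lambda>v. (DH x v / norm z) *\<^sub>R z)" for x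
    unfolding DG_def by (rule bounded_linear_Blinfun_apply)
  have G: "((\<lambda>x. (H x / norm z) *\<^sub>R z) has_derivative blinfun_apply (DG x)) (at x)" for x
    unfolding DG using H[of x] \<open>z \<noteq> 0\<close> by (auto intro!: derivative_eq_intros)
  have "continuous_on UNIV DG"
    by (rule continuous_on_blinfun_componentwise)
      (use \<open>z \<noteq> 0\<close> in \<open>auto simp: DG intro!: continuous_intros DH\<close>)
  with G show "C1_field (\<lambda>x. (H x / norm z) *\<^sub>R z)"
    unfolding C1_field_def by blast
  have "divergence (\<lambda>x. (H x / norm z) *\<^sub>R z) x = (\<Sum>i\<in>Basis. (DH x i / norm z) * (z \<bullet> i))"
    unfolding divergence_def frechet_derivative_at[OF G, symmetric] DG by (simp add: mult.commute)
  also have "\<dots> = DH x (\<Sum>i\<in>Basis. (z \<bullet> i) *\<^sub>R i) / norm z"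
    by (simp add: blinfun.sum_right blinfun.scaleR_right sum_divide_distrib mult.commute)
  finally show "divergence (\<lambda>x. (H x / norm z) *\<^sub>R z) x = DH x z / norm z"
    by (simp add: euclidean_representation)
qed

lemma unit_test_function_divergence_field:
  fixes h :: "'a::euclidean_space \<Rightarrow> real"
  assumes h: "unit_test_function h" and "z \<noteq> 0"
  obtains G where "C1_field G" "compact (closure {x. G x \<noteq> 0})" "\<And>x. norm (G x) \<le> 1"
    "\<And>x. divergence G x = (h x - h (x - z)) / norm z"
proof -
  obtain S where S: "compact S" "\<And>x. x \<notin> S \<Longrightarrow> h x = 0"
    using h unfolding unit_test_function_def by blast
  have h_le: "\<bar>h x\<bar> \<le> 1" for x using h by (simp add: unit_test_function_def)
  define H where "H x = integral (cbox 0 1) (\<lambda>t::real. h (x - t *\<^sub>R z))" for x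
  define G where "G x = (H x / norm z) *\<^sub>R z" for x
  obtain DH where "\<And>x. (H has_derivative blinfun_apply (DH x)) (at x)" "continuous_on UNIV DH"
    "\<And>x. DH x z = h x - h (x - z)"
    using line_average_has_derivative h unfolding unit_test_function_def H_def[abs_def] by blast
  note G_props = C1_field_scaled_direction[OF this(1,2) \<open>z \<noteq> 0\<close>, folded G_def] this(3)
  have "\<bar>H x\<bar> \<le> 1" for x
  proof -
    have "(\<lambda>t. h (x - t *\<^sub>R z)) integrable_on cbox 0 1"
      using h by (intro integrable_on_segment C1_function_continuous) (simp add: unit_test_function_def)
    from has_integral_bound[OF _ integrable_integral[OF this], of 1] h_le
    show ?thesis by (simp add: H_def)
  qed
  then have "norm (G x) \<le> 1" for x using \<open>z \<noteq> 0\<close> by (simp add: G_def)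
  moreover have "{x. G x \<noteq> 0} \<subseteq> (\<lambda>p. fst p + snd p *\<^sub>R z) ` (S \<times> {0..1})"
  proof
    fix x assume "x \<in> {x. G x \<noteq> 0}"
    then have "H x \<noteq> 0" by (auto simp: G_def)
    then obtain t where t: "t \<in> {0..1}" "h (x - t *\<^sub>R z) \<noteq> 0"
      unfolding H_def by (metis (no_types, lifting) integral_0 integral_cong cbox_interval)
    then have "(x - t *\<^sub>R z, t) \<in> S \<times> {0..1}" using S(2) by blast
    then show "x \<in> (\<lambda>p. fst p + snd p *\<^sub>R z) ` (S \<times> {0..1})" by force
  qed
  moreover have "compact ((\<lambda>p. fst p + snd p *\<^sub>R z) ` (S \<times> {0..1}))"
    by (intro compact_continuous_image compact_Times S(1) compact_Icc) (auto intro!: continuous_intros)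
  ultimately show ?thesis
    using that G_props by (metis compact_imp_bounded bounded_subset compact_closure)
qed

lemma bounded_variation_pairing_le:
  fixes \<psi> h :: "'a::euclidean_space \<Rightarrow> real"
  assumes \<psi>: "integrable lborel \<psi>"
    and V: "\<forall>G. C1_field G \<and> compact (closure {x. G x \<noteq> 0}) \<and> (\<forall>x. norm (G x) \<le> 1)
      \<longrightarrow> (\<integral>x. \<psi> x * divergence G x \<partial>lborel) \<le> V"
    and h: "unit_test_function h" and "z \<noteq> 0"
  shows "(\<integral>x. (\<psi> (x + z) - \<psi> x) * h x \<partial>lborel) \<le> V * norm z"
proof -
  obtain G where G: "C1_field G" "compact (closure {x. G x \<noteq> 0})" "\<And>x. norm (G x) \<le> 1"
    "\<And>x. divergence G x = (- h x - - h (x - z)) / norm z"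
    using unit_test_function_divergence_field[OF unit_test_function_uminus[OF h] \<open>z \<noteq> 0\<close>] by blast
  have h_cont: "continuous_on UNIV h" and h_le: "\<And>x. \<bar>h x\<bar> \<le> 1"
    using h by (auto simp: unit_test_function_def C1_function_continuous)
  have [measurable]: "h \<in> borel_measurable borel" by (rule borel_measurable_continuous_onI[OF h_cont])
  have [measurable]: "\<psi> \<in> borel_measurable borel" using borel_measurable_integrable[OF \<psi>] by simp
  have i1: "integrable lborel (\<lambda>x. \<psi> (x + z) * h x)"
    by (rule integrable_mult_bounded[OF integrable_lborel_translate[OF \<psi>] _ h_le]) simp
  have i2: "integrable lborel (\<lambda>x. \<psi> x * h x)"
    by (rule integrable_mult_bounded[OF \<psi> _ h_le]) simp
  have i3: "integrable lborel (\<lambda>x. \<psi> x * h (x - z))"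
    by (rule integrable_mult_bounded[OF \<psi> _ h_le]) measurable
  have "(\<integral>x. (\<psi> (x + z) - \<psi> x) * h x \<partial>lborel)
      = (\<integral>x. \<psi> (x + z) * h x \<partial>lborel) - (\<integral>x. \<psi> x * h x \<partial>lborel)"
    using i1 i2 by (simp add: left_diff_distrib)
  also have "(\<integral>x. \<psi> (x + z) * h x \<partial>lborel) = (\<integral>x. \<psi> x * h (x - z) \<partial>lborel)"
    using integral_lborel_translate[of "\<lambda>y. \<psi> y * h (y - z)" z] by simp
  also have "(\<integral>x. \<psi> x * h (x - z) \<partial>lborel) - (\<integral>x. \<psi> x * h x \<partial>lborel)
      = norm z * (\<integral>x. \<psi> x * divergence G x \<partial>lborel)"
    using i2 i3 \<open>z \<noteq> 0\<close> by (simp add: G(4) right_diff_distrib) (simp add: field_simps)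
  also have "\<dots> \<le> norm z * V"
    using V G(1-3) by (intro mult_left_mono) auto
  finally show ?thesis by (simp add: mult.commute)
qed

lemma bounded_variation_translate_le:
  fixes \<psi> :: "'a::euclidean_space \<Rightarrow> real"
  assumes "bounded_variation \<psi>"
  obtains C where "0 \<le> C" "\<And>z. (\<integral>x. \<bar>\<psi> (x + z) - \<psi> x\<bar> \<partial>lborel) \<le> C * norm z"
proof -
  obtain V where \<psi>: "integrable lborel \<psi>"
    and V: "\<forall>G. C1_field G \<and> compact (closure {x. G x \<noteq> 0}) \<and> (\<forall>x. norm (G x) \<le> 1)
      \<longrightarrow> (\<integral>x. \<psi> x * divergence G x \<partial>lborel) \<le> V"
    using assms unfolding bounded_variation_def by blast
  have "(\<integral>x. \<bar>\<psi> (x + z) - \<psi> x\<bar> \<partial>lborel) \<le> 5/3 * max V 0 * norm z" for z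
  proof (cases "z = 0")
    case False
    have f: "integrable lborel (\<lambda>x. \<psi> (x + z) - \<psi> x)"
      using integrable_lborel_translate[OF \<psi>] \<psi> by simp
    have "3/5 * (\<integral>x. \<bar>\<psi> (x + z) - \<psi> x\<bar> \<partial>lborel) \<le> max V 0 * norm z"
    proof (rule field_le_epsilon)
      fix e :: real assume "e > 0"
      obtain h where h: "unit_test_function h"
        and "3/5 * (\<integral>x. \<bar>\<psi> (x + z) - \<psi> x\<bar> \<partial>lborel) - e \<le> (\<integral>x. (\<psi> (x + z) - \<psi> x) * h x \<partial>lborel)"
        using unit_test_function_L1_approx[OF f \<open>e > 0\<close>] by blast
      moreover have "(\<integral>x. (\<psi> (x + z) - \<psi> x) * h x \<partial>lborel) \<le> V * norm z"
        by (rule bounded_variation_pairing_le[OF \<psi> V h False])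
      moreover have "V * norm z \<le> max V 0 * norm z" by (intro mult_right_mono) auto
      ultimately show "3/5 * (\<integral>x. \<bar>\<psi> (x + z) - \<psi> x\<bar> \<partial>lborel) \<le> max V 0 * norm z + e"
        by linarith
    qed
    then show ?thesis by simp
  qed simp
  then show ?thesis by (rule that[rotated]) simp
qed

lemma bounded_variation_translate_le_min:
  fixes \<psi> :: "'a::euclidean_space \<Rightarrow> real"
  assumes "bounded_variation \<psi>"
  shows "\<exists>B\<ge>0. \<forall>z. (\<integral>\<^sup>+ x. ennreal \<bar>\<psi> (x + z) - \<psi> x\<bar> \<partial>lborel) \<le> ennreal (B * min (norm z) 1)"
proof -
  have \<psi>: "integrable lborel \<psi>" using assms by (simp add: bounded_variation_def)
  have [measurable]: "\<psi> \<in> borel_measurable borel" using borel_measurable_integrable[OF \<psi>] by simp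
  obtain C where C: "0 \<le> C" "\<And>z. (\<integral>x. \<bar>\<psi> (x + z) - \<psi> x\<bar> \<partial>lborel) \<le> C * norm z"
    using bounded_variation_translate_le[OF assms] by blast
  define N where "N = (\<integral>x. \<bar>\<psi> x\<bar> \<partial>lborel)"
  have "(\<integral>x. \<bar>\<psi> (x + z) - \<psi> x\<bar> \<partial>lborel) \<le> (\<integral>x. \<bar>\<psi> (x + z)\<bar> + \<bar>\<psi> x\<bar> \<partial>lborel)" for z
    using \<psi> integrable_lborel_translate[OF \<psi>] by (intro integral_mono) auto
  also have "(\<integral>x. \<bar>\<psi> (x + z)\<bar> + \<bar>\<psi> x\<bar> \<partial>lborel) = 2 * N" for z
    using \<psi> integrable_lborel_translate[OF \<psi>] integral_lborel_translate[of "\<lambda>x. \<bar>\<psi> x\<bar>" z]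
    by (simp add: N_def)
  finally have N: "(\<integral>x. \<bar>\<psi> (x + z) - \<psi> x\<bar> \<partial>lborel) \<le> 2 * N" for z .
  have bound: "(\<integral>x. \<bar>\<psi> (x + z) - \<psi> x\<bar> \<partial>lborel) \<le> max C (2 * N) * min (norm z) 1" for z
  proof (cases "norm z \<le> 1")
    case True
    have "C * norm z \<le> max C (2 * N) * norm z" by (intro mult_right_mono) auto
    then show ?thesis using C(2)[of z] True by simp
  next
    case False
    then show ?thesis using N[of z] by simp
  qed
  show ?thesis
  proof (intro exI[of _ "max C (2 * N)"] conjI allI)
    show "0 \<le> max C (2 * N)" using C(1) by simp
    fix z
    have "(\<integral>\<^sup>+ x. ennreal \<bar>\<psi> (x + z) - \<psi> x\<bar> \<partial>lborel) = ennreal (\<integral>x. \<bar>\<psi> (x + z) - \<psi> x\<bar> \<partial>lborel)"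
      using \<psi> integrable_lborel_translate[OF \<psi>] by (intro nn_integral_eq_integral) auto
    then show "(\<integral>\<^sup>+ x. ennreal \<bar>\<psi> (x + z) - \<psi> x\<bar> \<partial>lborel) \<le> ennreal (max C (2 * N) * min (norm z) 1)"
      using bound[of z] by (simp add: ennreal_leI)
  qed
qed

section \<open>The cross energy\<close>

definition levy_cross_energy :: "'a::euclidean_space measure \<Rightarrow> ('a \<Rightarrow> real) \<Rightarrow> ('a \<Rightarrow> real) \<Rightarrow> ennreal" where
  "levy_cross_energy \<mu> \<psi> \<phi> =
     (\<integral>\<^sup>+ x. \<integral>\<^sup>+ z. ennreal (\<bar>\<psi> (x + z) - \<psi> x\<bar> * \<bar>\<phi> (x + z) - \<phi> x\<bar>) \<partial>\<mu> \<partial>lborel)"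

lemma levy_cross_energy_swap:
  fixes \<mu> :: "'a::euclidean_space measure"
  assumes "sigma_finite_measure \<mu>" "sets \<mu> = sets borel"
    and [measurable]: "\<psi> \<in> borel_measurable borel" "\<phi> \<in> borel_measurable borel"
  shows "levy_cross_energy \<mu> \<psi> \<phi> =
    (\<integral>\<^sup>+ z. \<integral>\<^sup>+ x. ennreal (\<bar>\<psi> (x + z) - \<psi> x\<bar> * \<bar>\<phi> (x + z) - \<phi> x\<bar>) \<partial>lborel \<partial>\<mu>)"
  unfolding levy_cross_energy_def by (rule nn_integral_swap_borel[OF assms(1,2)]) measurable

lemma levy_cross_energy_H_L:
  fixes \<mu> :: "'a::euclidean_space measure"
  assumes sf: "sigma_finite_measure \<mu>" and sets: "sets \<mu> = sets borel"
    and "H_L \<mu> \<psi>" "H_L \<mu> \<phi>"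
  shows "levy_cross_energy \<mu> \<psi> \<phi> < \<infinity>"
proof -
  have [measurable]: "\<psi> \<in> borel_measurable borel" "\<phi> \<in> borel_measurable borel"
    using assms by (auto simp: H_L_def)
  note sets[measurable_cong]
  have [measurable]:
    "(\<lambda>x. \<integral>\<^sup>+ z. ennreal ((\<psi> (x + z) - \<psi> x)\<^sup>2) \<partial>\<mu>) \<in> borel_measurable borel"
    "(\<lambda>x. \<integral>\<^sup>+ z. ennreal ((\<phi> (x + z) - \<phi> x)\<^sup>2) \<partial>\<mu>) \<in> borel_measurable borel"
    by (rule borel_measurable_nn_integral_borel[OF sf sets], measurable)+
  have "levy_cross_energy \<mu> \<psi> \<phi> \<le> (\<integral>\<^sup>+ x. \<integral>\<^sup>+ z.
      ennreal ((\<psi> (x + z) - \<psi> x)\<^sup>2) + ennreal ((\<phi> (x + z) - \<phi> x)\<^sup>2) \<partial>\<mu> \<partial>lborel)"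
    unfolding levy_cross_energy_def
    by (intro nn_integral_mono) (simp add: abs_mult_le_sum_squares flip: ennreal_plus)
  also have "\<dots> = (\<integral>\<^sup>+ x. (\<integral>\<^sup>+ z. ennreal ((\<psi> (x + z) - \<psi> x)\<^sup>2) \<partial>\<mu>)
      + (\<integral>\<^sup>+ z. ennreal ((\<phi> (x + z) - \<phi> x)\<^sup>2) \<partial>\<mu>) \<partial>lborel)"
    by (intro nn_integral_cong nn_integral_add) measurable
  also have "\<dots> = (\<integral>\<^sup>+ x. \<integral>\<^sup>+ z. ennreal ((\<psi> (x + z) - \<psi> x)\<^sup>2) \<partial>\<mu> \<partial>lborel)
      + (\<integral>\<^sup>+ x. \<integral>\<^sup>+ z. ennreal ((\<phi> (x + z) - \<phi> x)\<^sup>2) \<partial>\<mu> \<partial>lborel)"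
    by (rule nn_integral_add) measurable
  also have "\<dots> < \<infinity>" using assms by (simp add: H_L_def)
  finally show ?thesis .
qed

lemma nn_integral_indicator_translates_finite:
  fixes \<mu> :: "'a::euclidean_space measure"
  assumes sets: "sets \<mu> = sets borel" and "compact S"
    and [measurable]: "g \<in> borel_measurable borel" and "(\<integral>\<^sup>+ z. g z \<partial>\<mu>) < \<infinity>"
  shows "(\<integral>\<^sup>+ z. \<integral>\<^sup>+ x. g z * (indicator S x + indicator S (x + z)) \<partial>lborel \<partial>\<mu>) < \<infinity>"
proof -
  have [measurable]: "S \<in> sets borel" using \<open>compact S\<close> by (simp add: borel_compact)
  have "(\<integral>\<^sup>+ z. \<integral>\<^sup>+ x. g z * (indicator S x + indicator S (x + z)) \<partial>lborel \<partial>\<mu>)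
      = (\<integral>\<^sup>+ z. g z * (2 * emeasure lborel S) \<partial>\<mu>)"
    by (intro nn_integral_cong) (simp add: nn_integral_cmult nn_integral_indicator_translates)
  also have "\<dots> = (\<integral>\<^sup>+ z. g z \<partial>\<mu>) * (2 * emeasure lborel S)"
    by (rule nn_integral_multc) (simp add: measurable_cong_sets[OF sets refl])
  also have "\<dots> < \<infinity>"
    using assms emeasure_compact_finite[OF \<open>compact S\<close>] by (simp add: ennreal_mult_less_top)
  finally show ?thesis .
qed

lemma diff_product_le_lipschitz_indicator:
  fixes \<psi> \<phi> :: "'a::euclidean_space \<Rightarrow> real"
  assumes L: "L-lipschitz_on UNIV \<phi>" and C: "\<And>x. \<bar>\<phi> x\<bar> \<le> C"
    and vanish: "\<And>x z. x \<notin> S \<Longrightarrow> x + z \<notin> S \<Longrightarrow> \<bar>\<psi> (x + z) - \<psi> x\<bar> * \<bar>\<phi> (x + z) - \<phi> x\<bar> = 0"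
  shows "ennreal (\<bar>\<psi> (x + z) - \<psi> x\<bar> * \<bar>\<phi> (x + z) - \<phi> x\<bar>)
    \<le> ennreal ((\<psi> (x + z) - \<psi> x)\<^sup>2)
      + ennreal ((max L (2 * C))\<^sup>2 * min ((norm z)\<^sup>2) 1) * (indicator S x + indicator S (x + z))"
proof (cases "x \<in> S \<or> x + z \<in> S")
  case True
  define M where "M = max L (2 * C)"
  have "(\<phi> (x + z) - \<phi> x)\<^sup>2 \<le> (M * min (norm z) 1)\<^sup>2"
    using lipschitz_bounded_diff_le[OF L C, of x z] by (simp add: M_def power_mono_iff flip: abs_le_square_iff)
  then have "ennreal ((\<phi> (x + z) - \<phi> x)\<^sup>2) \<le> ennreal (M\<^sup>2 * min ((norm z)\<^sup>2) 1)"
    by (simp add: power_mult_distrib power2_min_one)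
  also have "\<dots> \<le> ennreal (M\<^sup>2 * min ((norm z)\<^sup>2) 1) * (indicator S x + indicator S (x + z))"
    using True by (rule le_mult_indicator_translates)
  finally show ?thesis
    unfolding M_def
    by (rule order_trans[rotated, OF add_left_mono])
      (simp add: abs_mult_le_sum_squares flip: ennreal_plus)
qed (simp add: vanish)

lemma levy_cross_energy_H_L_lipschitz:
  fixes \<mu> :: "'a::euclidean_space measure"
  assumes levy: "levy_measure \<mu>" and "H_L \<mu> \<psi>"
    and L: "L-lipschitz_on UNIV \<phi>" and C: "\<And>x. \<bar>\<phi> x\<bar> \<le> C"
    and "has_compact_support \<psi> \<or> has_compact_support \<phi>"
  shows "levy_cross_energy \<mu> \<psi> \<phi> < \<infinity>"
proof -
  have sets: "sets \<mu> = sets borel"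
    and lev: "(\<integral>\<^sup>+ z. ennreal (min ((norm z)\<^sup>2) 1) \<partial>\<mu>) < \<infinity>"
    using levy by (auto simp: levy_measure_def)
  note sets[measurable_cong]
  have [measurable]: "\<psi> \<in> borel_measurable borel"
    using \<open>H_L \<mu> \<psi>\<close> by (simp add: H_L_def)
  obtain S where S: "compact S"
    and vanish: "\<And>x z. x \<notin> S \<Longrightarrow> x + z \<notin> S \<Longrightarrow> \<bar>\<psi> (x + z) - \<psi> x\<bar> * \<bar>\<phi> (x + z) - \<phi> x\<bar> = 0"
    using diff_product_vanishes_off_compact assms(5) by blast
  have [measurable]: "S \<in> sets borel" using S by (simp add: borel_compact)
  define g where "g z = ennreal ((max L (2 * C))\<^sup>2 * min ((norm z)\<^sup>2) 1)" for z :: 'a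
  have [measurable]: "g \<in> borel_measurable borel" unfolding g_def by measurable
  have g_finite: "(\<integral>\<^sup>+ z. g z \<partial>\<mu>) < \<infinity>"
    using lev by (simp add: g_def ennreal_mult nn_integral_cmult ennreal_mult_less_top)
  note pointwise = diff_product_le_lipschitz_indicator[OF L C vanish, folded g_def]
  have sf: "sigma_finite_measure \<mu>" by (rule levy_measure_sigma_finite[OF levy])
  have [measurable]:
    "(\<lambda>x. \<integral>\<^sup>+ z. ennreal ((\<psi> (x + z) - \<psi> x)\<^sup>2) \<partial>\<mu>) \<in> borel_measurable borel"
    "(\<lambda>x. \<integral>\<^sup>+ z. g z * (indicator S x + indicator S (x + z)) \<partial>\<mu>) \<in> borel_measurable borel"
    by (rule borel_measurable_nn_integral_borel[OF sf sets], measurable)+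
  have "levy_cross_energy \<mu> \<psi> \<phi> \<le> (\<integral>\<^sup>+ x. \<integral>\<^sup>+ z. ennreal ((\<psi> (x + z) - \<psi> x)\<^sup>2)
      + g z * (indicator S x + indicator S (x + z)) \<partial>\<mu> \<partial>lborel)"
    unfolding levy_cross_energy_def by (intro nn_integral_mono pointwise)
  also have "\<dots> = (\<integral>\<^sup>+ x. (\<integral>\<^sup>+ z. ennreal ((\<psi> (x + z) - \<psi> x)\<^sup>2) \<partial>\<mu>)
      + (\<integral>\<^sup>+ z. g z * (indicator S x + indicator S (x + z)) \<partial>\<mu>) \<partial>lborel)"
    by (intro nn_integral_cong nn_integral_add) measurable
  also have "\<dots> = (\<integral>\<^sup>+ x. \<integral>\<^sup>+ z. ennreal ((\<psi> (x + z) - \<psi> x)\<^sup>2) \<partial>\<mu> \<partial>lborel)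
      + (\<integral>\<^sup>+ z. \<integral>\<^sup>+ x. g z * (indicator S x + indicator S (x + z)) \<partial>lborel \<partial>\<mu>)"
    by (subst nn_integral_add) (measurable, simp add: nn_integral_swap_borel[OF sf sets])
  also have "\<dots> < \<infinity>"
    using \<open>H_L \<mu> \<psi>\<close> nn_integral_indicator_translates_finite[OF sets S _ g_finite]
    by (simp add: H_L_def)
  finally show ?thesis .
qed

lemma levy_cross_energy_finite_measure:
  fixes \<mu> :: "'a::euclidean_space measure"
  assumes "finite_measure \<mu>" and sets: "sets \<mu> = sets borel" and "Linf \<psi>" "Linf \<phi>"
    and "has_compact_support \<psi> \<or> has_compact_support \<phi>"
  shows "levy_cross_energy \<mu> \<psi> \<phi> < \<infinity>"
proof -
  interpret finite_measure \<mu> by fact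
  have [measurable]: "\<psi> \<in> borel_measurable borel" "\<phi> \<in> borel_measurable borel"
    using assms by (auto simp: Linf_def)
  obtain C1 C2 where C1: "AE x in lborel. \<bar>\<psi> x\<bar> \<le> C1" and C2: "AE x in lborel. \<bar>\<phi> x\<bar> \<le> C2"
    using assms by (auto simp: Linf_def)
  obtain S where S: "compact S"
    and vanish: "\<And>x z. x \<notin> S \<Longrightarrow> x + z \<notin> S \<Longrightarrow> \<bar>\<psi> (x + z) - \<psi> x\<bar> * \<bar>\<phi> (x + z) - \<phi> x\<bar> = 0"
    using diff_product_vanishes_off_compact assms(5) by blast
  define c where "c = ennreal (2 * C1 * (2 * C2))"
  have bound: "AE x in lborel. ennreal (\<bar>\<psi> (x + z) - \<psi> x\<bar> * \<bar>\<phi> (x + z) - \<phi> x\<bar>)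
      \<le> c * (indicator S x + indicator S (x + z))" for z
    using C1 C2 AE_lborel_translate[OF C1, of z] AE_lborel_translate[OF C2, of z]
  proof eventually_elim
    case (elim x)
    show ?case
    proof (cases "x \<in> S \<or> x + z \<in> S")
      case True
      have "\<bar>\<psi> (x + z) - \<psi> x\<bar> * \<bar>\<phi> (x + z) - \<phi> x\<bar> \<le> 2 * C1 * (2 * C2)"
        using elim by (intro mult_mono) auto
      then have "ennreal (\<bar>\<psi> (x + z) - \<psi> x\<bar> * \<bar>\<phi> (x + z) - \<phi> x\<bar>) \<le> c"
        unfolding c_def by (rule ennreal_leI)
      also have "\<dots> \<le> c * (indicator S x + indicator S (x + z))"
        using True by (rule le_mult_indicator_translates)
      finally show ?thesis .
    qed (simp add: vanish)
  qed
  have "levy_cross_energy \<mu> \<psi> \<phi> \<le> (\<integral>\<^sup>+ z. \<integral>\<^sup>+ x. c * (indicator S x + indicator S (x + z)) \<partial>lborel \<partial>\<mu>)"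
    using sigma_finite_measure_axioms sets
    by (simp add: levy_cross_energy_swap nn_integral_mono nn_integral_mono_AE bound)
  also have "\<dots> < \<infinity>"
    using less_top[THEN iffD1, OF emeasure_finite[of "space \<mu>"]]
    by (intro nn_integral_indicator_translates_finite[OF sets S]) (simp_all add: c_def ennreal_mult_less_top less_top)
  finally show ?thesis .
qed

lemma nn_integral_diff_product_lipschitz_le:
  fixes \<psi> \<phi> :: "'a::euclidean_space \<Rightarrow> real"
  assumes [measurable]: "\<psi> \<in> borel_measurable borel"
    and B: "0 \<le> B" "\<And>z. (\<integral>\<^sup>+ x. ennreal \<bar>\<psi> (x + z) - \<psi> x\<bar> \<partial>lborel) \<le> ennreal (B * min (norm z) 1)"
    and L: "L-lipschitz_on UNIV \<phi>" and C: "\<And>x. \<bar>\<phi> x\<bar> \<le> C"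
  shows "(\<integral>\<^sup>+ x. ennreal (\<bar>\<psi> (x + z) - \<psi> x\<bar> * \<bar>\<phi> (x + z) - \<phi> x\<bar>) \<partial>lborel)
    \<le> ennreal (max L (2 * C) * B) * ennreal (min ((norm z)\<^sup>2) 1)"
proof -
  define M where "M = max L (2 * C)"
  have M: "0 \<le> M" using lipschitz_on_nonneg[OF L] by (simp add: M_def)
  have "(\<integral>\<^sup>+ x. ennreal (\<bar>\<psi> (x + z) - \<psi> x\<bar> * \<bar>\<phi> (x + z) - \<phi> x\<bar>) \<partial>lborel)
      \<le> (\<integral>\<^sup>+ x. ennreal (M * min (norm z) 1) * ennreal \<bar>\<psi> (x + z) - \<psi> x\<bar> \<partial>lborel)"
  proof (rule nn_integral_mono)
    fix x
    have "\<bar>\<psi> (x + z) - \<psi> x\<bar> * \<bar>\<phi> (x + z) - \<phi> x\<bar> \<le> \<bar>\<psi> (x + z) - \<psi> x\<bar> * (M * min (norm z) 1)"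
      unfolding M_def by (intro mult_left_mono lipschitz_bounded_diff_le[OF L C]) simp
    then show "ennreal (\<bar>\<psi> (x + z) - \<psi> x\<bar> * \<bar>\<phi> (x + z) - \<phi> x\<bar>)
        \<le> ennreal (M * min (norm z) 1) * ennreal \<bar>\<psi> (x + z) - \<psi> x\<bar>"
      using M by (subst ennreal_mult[symmetric]) (auto simp: mult.commute intro: ennreal_leI)
  qed
  also have "\<dots> = ennreal (M * min (norm z) 1) * (\<integral>\<^sup>+ x. ennreal \<bar>\<psi> (x + z) - \<psi> x\<bar> \<partial>lborel)"
    by (rule nn_integral_cmult) measurable
  also have "\<dots> \<le> ennreal (M * min (norm z) 1) * ennreal (B * min (norm z) 1)"
    by (intro mult_left_mono B(2)) simp
  also have "\<dots> = ennreal (M * B * (min (norm z) 1)\<^sup>2)"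
    using M B(1) by (subst ennreal_mult[symmetric]) (auto simp: power2_eq_square algebra_simps)
  also have "\<dots> = ennreal (M * B) * ennreal (min ((norm z)\<^sup>2) 1)"
    using M B(1) by (simp add: power2_min_one ennreal_mult)
  finally show ?thesis unfolding M_def .
qed

lemma levy_cross_energy_bounded_variation:
  fixes \<mu> :: "'a::euclidean_space measure"
  assumes levy: "levy_measure \<mu>" and BV: "bounded_variation \<psi>"
    and L: "L-lipschitz_on UNIV \<phi>" and C: "\<And>x. \<bar>\<phi> x\<bar> \<le> C"
  shows "levy_cross_energy \<mu> \<psi> \<phi> < \<infinity>"
proof -
  have sets: "sets \<mu> = sets borel"
    and lev: "(\<integral>\<^sup>+ z. ennreal (min ((norm z)\<^sup>2) 1) \<partial>\<mu>) < \<infinity>"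
    using levy by (auto simp: levy_measure_def)
  note sets[measurable_cong]
  have "integrable lborel \<psi>" using BV by (simp add: bounded_variation_def)
  from borel_measurable_integrable[OF this] have [measurable]: "\<psi> \<in> borel_measurable borel"
    by simp
  have [measurable]: "\<phi> \<in> borel_measurable borel"
    using L by (intro borel_measurable_continuous_onI lipschitz_on_continuous_on)
  obtain B where B: "0 \<le> B" "\<And>z. (\<integral>\<^sup>+ x. ennreal \<bar>\<psi> (x + z) - \<psi> x\<bar> \<partial>lborel) \<le> ennreal (B * min (norm z) 1)"
    using bounded_variation_translate_le_min[OF BV] by blast
  define K where "K = max L (2 * C) * B"
  have "levy_cross_energy \<mu> \<psi> \<phi> \<le> (\<integral>\<^sup>+ z. ennreal K * ennreal (min ((norm z)\<^sup>2) 1) \<partial>\<mu>)"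
    using levy_measure_sigma_finite[OF levy] sets nn_integral_diff_product_lipschitz_le[OF _ B L C]
    by (simp add: levy_cross_energy_swap nn_integral_mono K_def)
  also have "\<dots> = ennreal K * (\<integral>\<^sup>+ z. ennreal (min ((norm z)\<^sup>2) 1) \<partial>\<mu>)"
    by (rule nn_integral_cmult) measurable
  also have "\<dots> < \<infinity>"
    using lev by (simp add: ennreal_mult_less_top)
  finally show ?thesis .
qed

theorem mainTheorem15:
  fixes \<mu> :: "'a::euclidean_space measure" and \<psi> \<phi> :: "'a \<Rightarrow> real"
  assumes "levy_measure \<mu>"
    and "Linf \<psi>" and "Linf \<phi>"
    and "(H_L \<mu> \<psi> \<and> H_L \<mu> \<phi>)
       \<or> (H_L \<mu> \<psi> \<and> (\<exists>L. L-lipschitz_on UNIV \<phi>)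
            \<and> (has_compact_support \<psi> \<or> has_compact_support \<phi>))
       \<or> (bounded_variation \<psi> \<and> (\<exists>L. L-lipschitz_on UNIV \<phi>)
            \<and> (has_compact_support \<psi> \<or> has_compact_support \<phi>))
       \<or> ((has_compact_support \<psi> \<or> has_compact_support \<phi>)
            \<and> emeasure \<mu> (UNIV - {0}) < \<infinity>)"
  shows "(\<integral>\<^sup>+ x. (\<integral>\<^sup>+ z. ennreal (\<bar>\<psi> (x + z) - \<psi> x\<bar> * \<bar>\<phi> (x + z) - \<phi> x\<bar>) \<partial>\<mu>) \<partial>lborel) < \<infinity>"
proof -
  have sets: "sets \<mu> = sets borel" using assms(1) by (simp add: levy_measure_def)
  have bounded_if_lipschitz: "\<bar>\<phi> x\<bar> \<le> C" if "L-lipschitz_on UNIV \<phi>" "AE x in lborel. \<bar>\<phi> x\<bar> \<le> C" for L C x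
    using continuous_AE_bound_imp_bound[OF lipschitz_on_continuous_on] that by blast
  obtain C where C: "AE x in lborel. \<bar>\<phi> x\<bar> \<le> C" using assms(3) by (auto simp: Linf_def)
  consider (H_L) "H_L \<mu> \<psi>" "H_L \<mu> \<phi>"
    | (H_L_lipschitz) L where "H_L \<mu> \<psi>" "L-lipschitz_on UNIV \<phi>"
        "has_compact_support \<psi> \<or> has_compact_support \<phi>"
    | (bounded_variation) L where "bounded_variation \<psi>" "L-lipschitz_on UNIV \<phi>"
      \<comment> \<open>compact support is not needed in case (iii)\<close>
    | (finite) "has_compact_support \<psi> \<or> has_compact_support \<phi>" "emeasure \<mu> (UNIV - {0}) < \<infinity>"
    using assms(4) by blast
  then have "levy_cross_energy \<mu> \<psi> \<phi> < \<infinity>"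
  proof cases
    case H_L
    then show ?thesis using levy_cross_energy_H_L[OF levy_measure_sigma_finite[OF assms(1)] sets] by blast
  next
    case (H_L_lipschitz L)
    then show ?thesis using levy_cross_energy_H_L_lipschitz[OF assms(1)] bounded_if_lipschitz[OF _ C] by blast
  next
    case (bounded_variation L)
    then show ?thesis using levy_cross_energy_bounded_variation[OF assms(1)] bounded_if_lipschitz[OF _ C] by blast
  next
    case finite
    then show ?thesis
      using levy_cross_energy_finite_measure[OF levy_measure_finite_measure[OF assms(1)] sets assms(2,3)] by blast
  qed
  then show ?thesis by (simp add: levy_cross_energy_def)
qed

end
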